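(* Let $C$ be a program and $e,e'$ expressions such that the programs involved have total semantics, and let $\Phi_{\langle C,e,e'\rangle}(f)(\sigma)=[\![e]\!](\sigma)\cdot f^\dagger([\![C]\!](\sigma))+[\![e']\!](\sigma)\cdot\eta(\sigma)$. Then for all $n\in\mathbb N$, \[\Phi^{n+1}_{\langle C,e,e'\rangle}(\lambda x.\mathbf 0)=\sum_{k=0}^{n}[\![(\mathsf{assume}\ e;C)^k;\mathsf{assume}\ e']\!],\] where $D^0=\mathsf{skip}$, $D^{k+1}=D^k;D$, and the sum is pointwise.
   Context: $\mathcal A=\langle U,+,\cdot,\mathbf 0,\mathbf 1\rangle$ is a partial semiring ($+$ commutative, associative, possibly partial, unit $\mathbf 0$; $\cdot$ total, associative, unit $\mathbf 1$; two-sided distributivity; $\mathbf 0$ annihilates), naturally ordered, Scott continuous, with a top element. Infinite sums are suprema of finite partial sums. $\mathcal W(\Sigma)$: maps $m:\Sigma\to U$ with countable support and defined mass, with pointwise operations. $\eta(\sigma)(\tau)=\mathbf 1$ if $\sigma=\tau$ else $\mathbf 0$; $f^\dagger(m)(\tau)=\sum_{\sigma\in\mathrm{supp}(m)}m(\sigma)\cdot f(\sigma)(\tau)$. Program semantics: $[\![\mathsf{skip}]\!](\sigma)=\eta(\sigma)$; $[\![C_1;C_2]\!](\sigma)=[\![C_2]\!]^\dagger([\![C_1]\!](\sigma))$; $[\![\mathsf{assume}\ e]\!](\sigma)=[\![e]\!](\sigma)\cdot\eta(\sigma)$. An expression $e$ is a test $b$ (Boolean combination of $\mathsf{true},\mathsf{false}$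 and primitive tests $t\subseteq\Sigma$, with $[\![b]\!](\sigma)\in\{\mathbf 0,\mathbf 1\}$, $[\![t]\!](\sigma)=\mathbf 1$ iff $\sigma\in t$) or a weight $u\in U$ with $[\![u]\!](\sigma)=u$. *)

theory Defs
  imports Main "HOL-Library.Countable_Set"
begin

text \<open>A partial semiring over carrier type 'u. Partial addition is modelled as an
option-valued operation (None = undefined).\<close>

record 'u psemiring =
  padd :: "'u \<Rightarrow> 'u \<Rightarrow> 'u option"
  pmul :: "'u \<Rightarrow> 'u \<Rightarrow> 'u"
  pzero :: 'u
  pone :: 'u

definition nle :: "'u psemiring \<Rightarrow> 'u \<Rightarrow> 'u \<Rightarrow> bool" where
  "nle A a b \<longleftrightarrow> (\<exists>c. padd A a c = Some b)"

definition is_lub :: "'u psemiring \<Rightarrow> 'u set \<Rightarrow> 'u \<Rightarrow> bool" where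
  "is_lub A S u \<longleftrightarrow> (\<forall>s\<in>S. nle A s u) \<and> (\<forall>v. (\<forall>s\<in>S. nle A s v) \<longrightarrow> nle A u v)"

definition directed :: "'u psemiring \<Rightarrow> 'u set \<Rightarrow> bool" where
  "directed A D \<longleftrightarrow> D \<noteq> {} \<and> (\<forall>x\<in>D. \<forall>y\<in>D. \<exists>z\<in>D. nle A x z \<and> nle A y z)"

definition partial_semiring :: "'u psemiring \<Rightarrow> bool" where
  "partial_semiring A \<longleftrightarrow>
     \<comment> \<open>partial commutative monoid\<close>
     (\<forall>a b. padd A a b = padd A b a) \<and>
     (\<forall>a b c. Option.bind (padd A a b) (\<lambda>x. padd A x c) = Option.bind (padd A b c) (\<lambda>y. padd A a y)) \<and>
     (\<forall>a. padd A a (pzero A) = Some a) \<and>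
     \<comment> \<open>multiplicative monoid\<close>
     (\<forall>a b c. pmul A (pmul A a b) c = pmul A a (pmul A b c)) \<and>
     (\<forall>a. pmul A (pone A) a = a \<and> pmul A a (pone A) = a) \<and>
     \<comment> \<open>two-sided distributivity\<close>
     (\<forall>a b c d. padd A b c = Some d \<longrightarrow>
        padd A (pmul A a b) (pmul A a c) = Some (pmul A a d) \<and>
        padd A (pmul A b a) (pmul A c a) = Some (pmul A d a)) \<and>
     \<comment> \<open>zero annihilates\<close>
     (\<forall>a. pmul A (pzero A) a = pzero A \<and> pmul A a (pzero A) = pzero A)"

definition naturally_ordered :: "'u psemiring \<Rightarrow> bool" where
  "naturally_ordered A \<longleftrightarrow> (\<forall>a b. nle A a b \<and> nle A b a \<longrightarrow> a = b)"

definition scott_continuous :: "'u psemiring \<Rightarrow> bool" where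
  "scott_continuous A \<longleftrightarrow>
     (\<forall>D. directed A D \<longrightarrow> (\<exists>u. is_lub A D u)) \<and>
     (\<forall>D u a. directed A D \<longrightarrow> is_lub A D u \<longrightarrow>
        is_lub A (pmul A a ` D) (pmul A a u) \<and> is_lub A ((\<lambda>d. pmul A d a) ` D) (pmul A u a)) \<and>
     (\<forall>D u b. directed A D \<longrightarrow> is_lub A D u \<longrightarrow> (\<forall>d\<in>D. padd A d b \<noteq> None) \<longrightarrow>
        (\<exists>s. padd A u b = Some s \<and> is_lub A ((\<lambda>d. the (padd A d b)) ` D) s))"

definition has_top :: "'u psemiring \<Rightarrow> bool" where
  "has_top A \<longleftrightarrow> (\<exists>t. \<forall>a. nle A a t)"

definition good_semiring :: "'u psemiring \<Rightarrow> bool" where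
  "good_semiring A \<longleftrightarrow> partial_semiring A \<and> naturally_ordered A \<and> scott_continuous A \<and> has_top A"

inductive fsum_rel :: "'u psemiring \<Rightarrow> ('a \<Rightarrow> 'u) \<Rightarrow> 'a set \<Rightarrow> 'u \<Rightarrow> bool"
  for A f where
  empty: "fsum_rel A f {} (pzero A)"
| insert: "\<lbrakk>finite F; x \<notin> F; fsum_rel A f F s; padd A s (f x) = Some s'\<rbrakk>
            \<Longrightarrow> fsum_rel A f (insert x F) s'"

definition has_psum :: "'u psemiring \<Rightarrow> ('a \<Rightarrow> 'u) \<Rightarrow> 'a set \<Rightarrow> 'u \<Rightarrow> bool" where
  "has_psum A f S u \<longleftrightarrow>
     (\<forall>F. finite F \<and> F \<subseteq> S \<longrightarrow> (\<exists>s. fsum_rel A f F s)) \<and>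
     is_lub A {s. \<exists>F. finite F \<and> F \<subseteq> S \<and> fsum_rel A f F s} u"

definition psum :: "'u psemiring \<Rightarrow> ('a \<Rightarrow> 'u) \<Rightarrow> 'a set \<Rightarrow> 'u option" where
  "psum A f S = (if \<exists>u. has_psum A f S u then Some (THE u. has_psum A f S u) else None)"

definition supp :: "'u psemiring \<Rightarrow> ('s \<Rightarrow> 'u) \<Rightarrow> 's set" where
  "supp A m = {\<sigma>. m \<sigma> \<noteq> pzero A}"

definition inW :: "'u psemiring \<Rightarrow> ('s \<Rightarrow> 'u) \<Rightarrow> bool" where
  "inW A m \<longleftrightarrow> countable (supp A m) \<and> psum A m (supp A m) \<noteq> None"

definition eta :: "'u psemiring \<Rightarrow> 's \<Rightarrow> 's \<Rightarrow> 'u" where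
  "eta A \<sigma> \<tau> = (if \<sigma> = \<tau> then pone A else pzero A)"

definition wzero :: "'u psemiring \<Rightarrow> 's \<Rightarrow> 'u" where
  "wzero A = (\<lambda>_. pzero A)"

definition wscale :: "'u psemiring \<Rightarrow> 'u \<Rightarrow> ('s \<Rightarrow> 'u) \<Rightarrow> 's \<Rightarrow> 'u" where
  "wscale A u m = (\<lambda>\<tau>. pmul A u (m \<tau>))"

definition wadd :: "'u psemiring \<Rightarrow> ('s \<Rightarrow> 'u) \<Rightarrow> ('s \<Rightarrow> 'u) \<Rightarrow> ('s \<Rightarrow> 'u) option" where
  "wadd A m1 m2 =
     (if (\<forall>\<tau>. padd A (m1 \<tau>) (m2 \<tau>) \<noteq> None) \<and> inW A (\<lambda>\<tau>. the (padd A (m1 \<tau>) (m2 \<tau>)))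
      then Some (\<lambda>\<tau>. the (padd A (m1 \<tau>) (m2 \<tau>))) else None)"

fun wsum :: "'u psemiring \<Rightarrow> ('s \<Rightarrow> 'u) list \<Rightarrow> ('s \<Rightarrow> 'u) option" where
  "wsum A [] = Some (wzero A)"
| "wsum A (m # ms) = Option.bind (wsum A ms) (wadd A m)"

definition bind :: "'u psemiring \<Rightarrow> ('s \<Rightarrow> 's \<Rightarrow> 'u) \<Rightarrow> ('s \<Rightarrow> 'u) \<Rightarrow> ('s \<Rightarrow> 'u) option" where
  "bind A f m =
     (let r = (\<lambda>\<tau>. psum A (\<lambda>\<sigma>. pmul A (m \<sigma>) (f \<sigma> \<tau>)) (supp A m)) in
      if (\<forall>\<tau>. r \<tau> \<noteq> None) \<and> inW A (\<lambda>\<tau>. the (r \<tau>)) then Some (\<lambda>\<tau>. the (r \<tau>)) else None)"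

definition lift_kernel :: "('s \<Rightarrow> 'a option) \<Rightarrow> ('s \<Rightarrow> 'a) option" where
  "lift_kernel g = (if \<forall>\<sigma>. g \<sigma> \<noteq> None then Some (\<lambda>\<sigma>. the (g \<sigma>)) else None)"

datatype 's test = TTrue | TFalse | TPrim "'s set" | TNot "'s test"
  | TAnd "'s test" "'s test" | TOr "'s test" "'s test"

fun test_sem :: "'s test \<Rightarrow> 's \<Rightarrow> bool" where
  "test_sem TTrue \<sigma> = True"
| "test_sem TFalse \<sigma> = False"
| "test_sem (TPrim t) \<sigma> = (\<sigma> \<in> t)"
| "test_sem (TNot b) \<sigma> = (\<not> test_sem b \<sigma>)"
| "test_sem (TAnd b c) \<sigma> = (test_sem b \<sigma> \<and> test_sem c \<sigma>)"
| "test_sem (TOr b c) \<sigma> = (test_sem b \<sigma> \<or> test_sem c \<sigma>)"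

datatype ('s, 'u) expr = ETest "'s test" | EWeight 'u

fun esem :: "'u psemiring \<Rightarrow> ('s, 'u) expr \<Rightarrow> 's \<Rightarrow> 'u" where
  "esem A (ETest b) \<sigma> = (if test_sem b \<sigma> then pone A else pzero A)"
| "esem A (EWeight u) \<sigma> = u"

text \<open>Programs: skip, sequencing, assume, and an arbitrary atomic program given by
its (possibly undefined) kernel semantics, standing for an arbitrary program C.\<close>
datatype ('s, 'u) prog = Skip | Seq "('s, 'u) prog" "('s, 'u) prog"
  | Assume "('s, 'u) expr" | Atom "'s \<Rightarrow> 's \<Rightarrow> 'u"

fun sem :: "'u psemiring \<Rightarrow> ('s, 'u) prog \<Rightarrow> 's \<Rightarrow> ('s \<Rightarrow> 'u) option" where
  "sem A Skip \<sigma> = Some (eta A \<sigma>)"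
| "sem A (Assume e) \<sigma> = Some (wscale A (esem A e \<sigma>) (eta A \<sigma>))"
| "sem A (Atom K) \<sigma> = (if inW A (K \<sigma>) then Some (K \<sigma>) else None)"
| "sem A (Seq C1 C2) \<sigma> =
     (case sem A C1 \<sigma> of None \<Rightarrow> None
      | Some m \<Rightarrow> if \<forall>\<sigma>'\<in>supp A m. sem A C2 \<sigma>' \<noteq> None
                  then bind A (\<lambda>\<sigma>'. the (sem A C2 \<sigma>')) m else None)"

definition total_sem :: "'u psemiring \<Rightarrow> ('s, 'u) prog \<Rightarrow> bool" where
  "total_sem A C \<longleftrightarrow> (\<forall>\<sigma>. sem A C \<sigma> \<noteq> None)"

fun ppow :: "('s, 'u) prog \<Rightarrow> nat \<Rightarrow> ('s, 'u) prog" where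
  "ppow D 0 = Skip"
| "ppow D (Suc k) = Seq (ppow D k) D"

definition Phi :: "'u psemiring \<Rightarrow> ('s, 'u) prog \<Rightarrow> ('s, 'u) expr \<Rightarrow> ('s, 'u) expr
                   \<Rightarrow> ('s \<Rightarrow> 's \<Rightarrow> 'u) \<Rightarrow> ('s \<Rightarrow> 's \<Rightarrow> 'u) option" where
  "Phi A C e e' f = lift_kernel (\<lambda>\<sigma>.
     Option.bind (sem A C \<sigma>) (\<lambda>m. Option.bind (bind A f m) (\<lambda>m'.
       wadd A (wscale A (esem A e \<sigma>) m') (wscale A (esem A e' \<sigma>) (eta A \<sigma>)))))"

fun Phi_iter :: "'u psemiring \<Rightarrow> ('s, 'u) prog \<Rightarrow> ('s, 'u) expr \<Rightarrow> ('s, 'u) expr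
                 \<Rightarrow> nat \<Rightarrow> ('s \<Rightarrow> 's \<Rightarrow> 'u) option" where
  "Phi_iter A C e e' 0 = Some (\<lambda>_. wzero A)"
| "Phi_iter A C e e' (Suc n) = Option.bind (Phi_iter A C e e' n) (Phi A C e e')"

definition sem_sum :: "'u psemiring \<Rightarrow> ('s, 'u) prog list \<Rightarrow> ('s \<Rightarrow> 's \<Rightarrow> 'u) option" where
  "sem_sum A Ps = lift_kernel (\<lambda>\<sigma>. Option.bind (those (map (\<lambda>P. sem A P \<sigma>) Ps)) (wsum A))"

end

theory Submission
  imports Defs
begin

text \<open>Write \<open>P\<^sub>k\<close> for the unrolling \<open>(assume e; C)\<^sup>k; assume e'\<close>. Then
  \<open>P\<^sub>0(\<sigma>) = e'(\<sigma>)\<cdot>\<eta>(\<sigma>)\<close> and \<open>P\<^sub>k\<^sub>+\<^sub>1(\<sigma>) = e(\<sigma>)\<cdot>P\<^sub>k\<^sup>\<dagger>(C(\<sigma>))\<close>, the latter because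
  the Kleisli extension is associative, so that the loop may be unrolled at the front. As the
  Kleisli extension also commutes with finite sums of kernels, \<open>\<Phi>\<close> maps \<open>\<Sum>\<^sub>k\<^sub><\<^sub>n P\<^sub>k\<close> to
  \<open>\<Sum>\<^sub>k\<^sub>\<le>\<^sub>n P\<^sub>k\<close>, and induction on \<open>n\<close> gives the claim; when a partial sum is undefined, so
  is the next one, and both sides are undefined together.

  Associativity and the commutation with sums are instances of Fubini's theorem for sums in the
  semiring, which holds because addition and multiplication preserve directed suprema. The top
  element guarantees that all the weighted sums defining the Kleisli extension exist.\<close>

text \<open>The partial addition lifted to options, with \<^const>\<open>None\<close> absorbing, is a total commutative
  monoid, so the library's finite sums over it are the partial finite sums.\<close>

definition oadd :: "'u psemiring \<Rightarrow> 'u option \<Rightarrow> 'u option \<Rightarrow> 'u option" where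
  "oadd A x y = (case (x, y) of (Some a, Some b) \<Rightarrow> padd A a b | _ \<Rightarrow> None)"

lemma oadd_simps [simp]:
  "oadd A None y = None" "oadd A x None = None" "oadd A (Some a) (Some b) = padd A a b"
  by (auto simp: oadd_def split: option.splits)

lemma oadd_eq_SomeD: "oadd A x y = Some s \<Longrightarrow> \<exists>a b. x = Some a \<and> y = Some b \<and> padd A a b = Some s"
  by (cases x; cases y) auto

locale good_psemiring =
  fixes A :: "'u psemiring"
  assumes good: "good_semiring A"
begin

lemma partial_semiring: "partial_semiring A"
  using good by (simp add: good_semiring_def)

lemma padd_commute: "padd A a b = padd A b a"
  using partial_semiring by (simp add: partial_semiring_def)

lemma padd_zero_right [simp]: "padd A a (pzero A) = Some a"
  using partial_semiring by (simp add: partial_semiring_def)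

lemma padd_zero_left [simp]: "padd A (pzero A) a = Some a"
  using padd_commute padd_zero_right by metis

lemma padd_assoc:
  "Option.bind (padd A a b) (\<lambda>x. padd A x c) = Option.bind (padd A b c) (padd A a)"
  using partial_semiring unfolding partial_semiring_def by blast

lemma pmul_assoc: "pmul A (pmul A a b) c = pmul A a (pmul A b c)"
  using partial_semiring by (simp add: partial_semiring_def)

lemma pmul_zero [simp]: "pmul A (pzero A) a = pzero A" "pmul A a (pzero A) = pzero A"
  using partial_semiring by (simp_all add: partial_semiring_def)

lemma pmul_one [simp]: "pmul A (pone A) a = a" "pmul A a (pone A) = a"
  using partial_semiring by (simp_all add: partial_semiring_def)

lemma distrib_left: "padd A b c = Some d \<Longrightarrow> padd A (pmul A a b) (pmul A a c) = Some (pmul A a d)"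
  using partial_semiring unfolding partial_semiring_def by blast

lemma distrib_right: "padd A b c = Some d \<Longrightarrow> padd A (pmul A b a) (pmul A c a) = Some (pmul A d a)"
  using partial_semiring unfolding partial_semiring_def by blast

lemma nle_antisym: "nle A a b \<Longrightarrow> nle A b a \<Longrightarrow> a = b"
  using good unfolding good_semiring_def naturally_ordered_def by blast

lemma directed_has_lub: "directed A D \<Longrightarrow> \<exists>u. is_lub A D u"
  using good unfolding good_semiring_def scott_continuous_def by blast

lemma is_lub_pmul:
  "directed A D \<Longrightarrow> is_lub A D u \<Longrightarrow>
     is_lub A (pmul A a ` D) (pmul A a u) \<and> is_lub A ((\<lambda>d. pmul A d a) ` D) (pmul A u a)"
  using good unfolding good_semiring_def scott_continuous_def by blast

lemma is_lub_padd:
  "directed A D \<Longrightarrow> is_lub A D u \<Longrightarrow> (\<forall>d\<in>D. padd A d b \<noteq> None) \<Longrightarrow>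
     \<exists>s. padd A u b = Some s \<and> is_lub A ((\<lambda>d. the (padd A d b)) ` D) s"
  using good unfolding good_semiring_def scott_continuous_def by blast

lemma top_exists: "\<exists>t. \<forall>a. nle A a t"
  using good unfolding good_semiring_def has_top_def by blast

sublocale osum: comm_monoid_set "oadd A" "Some (pzero A)"
proof
  fix a b c :: "'u option"
  have "oadd A (padd A x y) (Some z) = oadd A (Some x) (padd A y z)" for x y z
    using padd_assoc[of x y z] by (cases "padd A x y"; cases "padd A y z") simp_all
  then show "oadd A (oadd A a b) c = oadd A a (oadd A b c)"
    by (cases a; cases b; cases c) simp_all
  show "oadd A a b = oadd A b a"
    using padd_commute by (cases a; cases b) auto
  show "oadd A a (Some (pzero A)) = a"
    by (cases a) simp_all
qed

sublocale osum_list: comm_monoid_list_set "oadd A" "Some (pzero A)" ..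

abbreviation fsum :: "('a \<Rightarrow> 'u) \<Rightarrow> 'a set \<Rightarrow> 'u option" where
  "fsum f F \<equiv> osum.F (\<lambda>x. Some (f x)) F"

lemma nle_refl [simp]: "nle A a a"
  unfolding nle_def using padd_zero_right by blast

lemma zero_nle [simp]: "nle A (pzero A) a"
  unfolding nle_def by auto

lemma nle_zero: "nle A a (pzero A) \<Longrightarrow> a = pzero A"
  using nle_antisym zero_nle by blast

lemma padd_nle_left: "padd A a b = Some s \<Longrightarrow> nle A a s"
  unfolding nle_def by blast

lemma padd_nle_right: "padd A a b = Some s \<Longrightarrow> nle A b s"
  unfolding nle_def using padd_commute by metis

lemma nle_trans:
  assumes "nle A a b" and "nle A b c"
  shows "nle A a c"
proof -
  obtain d1 d2 where "padd A a d1 = Some b" and "padd A b d2 = Some c"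
    using assms unfolding nle_def by blast
  then have "oadd A (oadd A (Some a) (Some d1)) (Some d2) = Some c"
    by simp
  then have "oadd A (Some a) (oadd A (Some d1) (Some d2)) = Some c"
    by (simp only: osum.assoc)
  then show ?thesis
    unfolding nle_def by (metis oadd_eq_SomeD oadd_simps(3))
qed

lemma padd_mono_left:
  assumes "nle A a b" and "padd A b c = Some s"
  shows "\<exists>s'. padd A a c = Some s' \<and> nle A s' s"
proof -
  obtain d where "padd A a d = Some b"
    using assms(1) unfolding nle_def by blast
  with assms(2) have "oadd A (oadd A (Some a) (Some c)) (Some d) = Some s"
    by (metis oadd_simps(3) osum.assoc osum.commute)
  then show ?thesis
    by (metis oadd_eq_SomeD oadd_simps(3) padd_nle_left)
qed

lemma padd_mono:
  assumes "nle A a a'" and "nle A b b'" and "padd A a' b' = Some t"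
  shows "\<exists>s. padd A a b = Some s \<and> nle A s t"
proof -
  obtain s1 where s1: "padd A b' a = Some s1" "nle A s1 t"
    using padd_mono_left[OF assms(1) assms(3)] padd_commute by metis
  obtain s2 where "padd A b a = Some s2" "nle A s2 s1"
    using padd_mono_left[OF assms(2) s1(1)] by blast
  then show ?thesis
    using s1(2) padd_commute nle_trans by metis
qed

lemma pmul_mono_left: "nle A a b \<Longrightarrow> nle A (pmul A c a) (pmul A c b)"
  unfolding nle_def using distrib_left by blast

lemma is_lub_unique: "is_lub A D u \<Longrightarrow> is_lub A D v \<Longrightarrow> u = v"
  unfolding is_lub_def using nle_antisym by blast

section \<open>Finite and infinite sums\<close>

lemma fsum_mono:
  assumes "finite F" and "\<And>x. x \<in> F \<Longrightarrow> nle A (f x) (g x)" and "fsum g F = Some t"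
  shows "\<exists>s. fsum f F = Some s \<and> nle A s t"
  using assms
proof (induction F arbitrary: t rule: finite_induct)
  case empty
  then show ?case by simp
next
  case (insert x F)
  then obtain t' where t': "fsum g F = Some t'" "padd A (g x) t' = Some t"
    by (auto dest: oadd_eq_SomeD)
  with insert obtain s' where "fsum f F = Some s'" "nle A s' t'"
    by blast
  with insert padd_mono[OF _ _ t'(2)] show ?case
    by fastforce
qed

lemma fsum_subset:
  assumes "finite F" and "G \<subseteq> F" and "fsum f F = Some t"
  shows "\<exists>s. fsum f G = Some s \<and> nle A s t"
proof -
  have "oadd A (fsum f (F - G)) (fsum f G) = Some t"
    using osum.subset_diff[OF assms(2,1)] assms(3) by simp
  then show ?thesis
    using padd_nle_right by (blast dest: oadd_eq_SomeD)
qed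

lemma fsum_pmul_left:
  assumes "finite F" and "fsum f F = Some s"
  shows "fsum (\<lambda>x. pmul A c (f x)) F = Some (pmul A c s)"
  using assms
proof (induction F arbitrary: s rule: finite_induct)
  case (insert x F)
  then show ?case
    by (auto dest!: oadd_eq_SomeD intro: distrib_left)
qed simp

lemma fsum_pmul_right:
  assumes "finite F" and "fsum f F = Some s"
  shows "fsum (\<lambda>x. pmul A (f x) c) F = Some (pmul A s c)"
  using assms
proof (induction F arbitrary: s rule: finite_induct)
  case (insert x F)
  then show ?case
    by (auto dest!: oadd_eq_SomeD intro: distrib_right)
qed simp

lemma fsum_Times:
  assumes "finite G" and "finite H"
  shows "fsum (\<lambda>(i, j). a i j) (G \<times> H) = osum.F (\<lambda>i. fsum (a i) H) G"
  by (simp add: osum.cartesian_product case_prod_beta')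

lemma fsum_rel_iff: "fsum_rel A f F s \<longleftrightarrow> finite F \<and> fsum f F = Some s"
proof
  assume "fsum_rel A f F s"
  then show "finite F \<and> fsum f F = Some s"
    by induction (simp_all add: padd_commute)
next
  assume "finite F \<and> fsum f F = Some s"
  then have "finite F" and "fsum f F = Some s"
    by auto
  then show "fsum_rel A f F s"
  proof (induction F arbitrary: s rule: finite_induct)
    case empty
    then show ?case
      using fsum_rel.empty by fastforce
  next
    case (insert x F)
    then obtain s' where "fsum f F = Some s'" "padd A s' (f x) = Some s"
      by (auto dest: oadd_eq_SomeD simp: padd_commute)
    with insert show ?case
      by (blast intro: fsum_rel.insert)
  qed
qed

definition psums :: "('a \<Rightarrow> 'u) \<Rightarrow> 'a set \<Rightarrow> 'u set" where
  "psums f S = {s. \<exists>F. finite F \<and> F \<subseteq> S \<and> fsum f F = Some s}"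

lemma psumsI: "finite F \<Longrightarrow> F \<subseteq> S \<Longrightarrow> fsum f F = Some s \<Longrightarrow> s \<in> psums f S"
  unfolding psums_def by auto

lemma psumsE:
  assumes "s \<in> psums f S"
  obtains F where "finite F" "F \<subseteq> S" "fsum f F = Some s"
  using assms unfolding psums_def by auto

lemma has_psum_iff:
  "has_psum A f S u \<longleftrightarrow>
     (\<forall>F. finite F \<and> F \<subseteq> S \<longrightarrow> fsum f F \<noteq> None) \<and> is_lub A (psums f S) u"
proof -
  have "{s. \<exists>F. finite F \<and> F \<subseteq> S \<and> fsum_rel A f F s} = psums f S"
    unfolding psums_def fsum_rel_iff by blast
  then show ?thesis
    unfolding has_psum_def fsum_rel_iff by auto
qed

lemma psums_directed:
  assumes "\<forall>F. finite F \<and> F \<subseteq> S \<longrightarrow> fsum f F \<noteq> None"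
  shows "directed A (psums f S)"
  unfolding directed_def
proof (intro conjI ballI)
  show "psums f S \<noteq> {}"
    using psumsI[of "{}"] by auto
next
  fix x y
  assume "x \<in> psums f S" "y \<in> psums f S"
  then obtain F G where F: "finite F" "F \<subseteq> S" "fsum f F = Some x"
    and G: "finite G" "G \<subseteq> S" "fsum f G = Some y"
    by (auto elim!: psumsE)
  then obtain z where z: "fsum f (F \<union> G) = Some z"
    using assms by fastforce
  have "finite (F \<union> G)"
    using F G by blast
  then have "nle A x z" "nle A y z"
    using fsum_subset[OF _ _ z] F(3) G(3) by (metis Un_upper1 Un_upper2 option.inject)+
  moreover have "z \<in> psums f S"
    using psumsI[OF \<open>finite (F \<union> G)\<close> Un_least[OF F(2) G(2)] z] .
  ultimately show "\<exists>z\<in>psums f S. nle A x z \<and> nle A y z"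
    by blast
qed

lemma has_psum_le:
  assumes "has_psum A f S u" and "finite F" and "F \<subseteq> S"
  shows "\<exists>s. fsum f F = Some s \<and> nle A s u"
proof -
  have "fsum f F \<noteq> None" and lub: "is_lub A (psums f S) u"
    using assms unfolding has_psum_iff by auto
  then obtain s where s: "fsum f F = Some s"
    by blast
  then have "nle A s u"
    using lub psumsI[OF assms(2,3) s] unfolding is_lub_def by blast
  with s show ?thesis
    by blast
qed

lemma has_psum_least:
  assumes "has_psum A f S u"
    and "\<And>F s. finite F \<Longrightarrow> F \<subseteq> S \<Longrightarrow> fsum f F = Some s \<Longrightarrow> nle A s v"
  shows "nle A u v"
proof -
  have "is_lub A (psums f S) u"
    using assms(1) unfolding has_psum_iff by auto
  moreover have "\<forall>s\<in>psums f S. nle A s v"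
    using assms(2) by (auto elim: psumsE)
  ultimately show ?thesis
    unfolding is_lub_def by blast
qed

lemma has_psum_intro:
  assumes below: "\<And>F. finite F \<Longrightarrow> F \<subseteq> S \<Longrightarrow> \<exists>s. fsum f F = Some s \<and> nle A s u"
    and least: "\<And>v. (\<And>F s. finite F \<Longrightarrow> F \<subseteq> S \<Longrightarrow> fsum f F = Some s \<Longrightarrow> nle A s v) \<Longrightarrow> nle A u v"
  shows "has_psum A f S u"
proof -
  have "\<forall>F. finite F \<and> F \<subseteq> S \<longrightarrow> fsum f F \<noteq> None"
    using below by fastforce
  moreover have "\<forall>s\<in>psums f S. nle A s u"
    using below by (fastforce elim: psumsE)
  moreover have "nle A u v" if "\<forall>s\<in>psums f S. nle A s v" for v
    using least that psumsI by blast
  ultimately show ?thesis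
    unfolding has_psum_iff is_lub_def by blast
qed

lemma has_psum_exists_le:
  assumes "\<And>F. finite F \<Longrightarrow> F \<subseteq> S \<Longrightarrow> \<exists>s. fsum f F = Some s \<and> nle A s v"
  shows "\<exists>u. has_psum A f S u \<and> nle A u v"
proof -
  have defined: "\<forall>F. finite F \<and> F \<subseteq> S \<longrightarrow> fsum f F \<noteq> None"
    using assms by fastforce
  then obtain u where u: "is_lub A (psums f S) u"
    using directed_has_lub[OF psums_directed] by blast
  have "\<forall>s\<in>psums f S. nle A s v"
    using assms by (fastforce elim: psumsE)
  with u have "nle A u v"
    unfolding is_lub_def by blast
  with u defined show ?thesis
    unfolding has_psum_iff by blast
qed

lemma has_psum_unique:
  assumes "has_psum A f S u" and "has_psum A f S v"
  shows "u = v"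
  using assms unfolding has_psum_iff by (auto intro: is_lub_unique)

lemma psum_eq_Some_iff: "psum A f S = Some u \<longleftrightarrow> has_psum A f S u"
proof -
  have the_eq: "(THE u. has_psum A f S u) = v" if "has_psum A f S v" for v
    using that has_psum_unique by (intro the_equality)
  show ?thesis
  proof
    assume "psum A f S = Some u"
    then obtain v where "has_psum A f S v" and "(THE u. has_psum A f S u) = u"
      unfolding psum_def by (auto split: if_splits)
    then show "has_psum A f S u"
      using the_eq by simp
  next
    assume "has_psum A f S u"
    then show "psum A f S = Some u"
      unfolding psum_def using the_eq by auto
  qed
qed

lemma has_psum_same_psums:
  assumes ST: "\<And>F. finite F \<Longrightarrow> F \<subseteq> S \<Longrightarrow> \<exists>G. finite G \<and> G \<subseteq> T \<and> fsum f F = fsum g G"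
    and TS: "\<And>G. finite G \<Longrightarrow> G \<subseteq> T \<Longrightarrow> \<exists>F. finite F \<and> F \<subseteq> S \<and> fsum f F = fsum g G"
  shows "has_psum A f S u \<longleftrightarrow> has_psum A g T u"
proof -
  have "psums f S = psums g T"
  proof (intro set_eqI iffI)
    fix s
    assume "s \<in> psums f S"
    then obtain F where F: "finite F" "F \<subseteq> S" "fsum f F = Some s"
      by (rule psumsE)
    then obtain G where "finite G" "G \<subseteq> T" "fsum g G = Some s"
      using ST[OF F(1,2)] by metis
    then show "s \<in> psums g T"
      by (rule psumsI)
  next
    fix s
    assume "s \<in> psums g T"
    then obtain G where G: "finite G" "G \<subseteq> T" "fsum g G = Some s"
      by (rule psumsE)
    then obtain F where "finite F" "F \<subseteq> S" "fsum f F = Some s"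
      using TS[OF G(1,2)] by metis
    then show "s \<in> psums f S"
      by (rule psumsI)
  qed
  moreover have "(\<forall>F. finite F \<and> F \<subseteq> S \<longrightarrow> fsum f F \<noteq> None) \<longleftrightarrow>
      (\<forall>G. finite G \<and> G \<subseteq> T \<longrightarrow> fsum g G \<noteq> None)"
  proof (intro iffI allI impI)
    fix G
    assume "\<forall>F. finite F \<and> F \<subseteq> S \<longrightarrow> fsum f F \<noteq> None" "finite G \<and> G \<subseteq> T"
    then show "fsum g G \<noteq> None"
      using TS by metis
  next
    fix F
    assume "\<forall>G. finite G \<and> G \<subseteq> T \<longrightarrow> fsum g G \<noteq> None" "finite F \<and> F \<subseteq> S"
    then show "fsum f F \<noteq> None"
      using ST by metis
  qed
  ultimately show ?thesis
    unfolding has_psum_iff by simp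
qed

lemma has_psum_nonzero_cong:
  assumes "S \<inter> {x. f x \<noteq> pzero A} = T \<inter> {x. f x \<noteq> pzero A}"
  shows "has_psum A f S u \<longleftrightarrow> has_psum A f T u"
proof -
  define N where "N = {x. f x \<noteq> pzero A}"
  have drop_zeros: "fsum f F = fsum f (F \<inter> N)" if "finite F" for F
    using that unfolding N_def by (intro osum.mono_neutral_right) auto
  show ?thesis
  proof (rule has_psum_same_psums)
    fix F
    assume "finite F" "F \<subseteq> S"
    moreover have "F \<inter> N \<subseteq> T"
      using \<open>F \<subseteq> S\<close> assms unfolding N_def by blast
    ultimately show "\<exists>G. finite G \<and> G \<subseteq> T \<and> fsum f F = fsum f G"
      using drop_zeros by blast
  next
    fix G
    assume "finite G" "G \<subseteq> T"
    moreover have "G \<inter> N \<subseteq> S"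
      using \<open>G \<subseteq> T\<close> assms unfolding N_def by blast
    ultimately show "\<exists>F. finite F \<and> F \<subseteq> S \<and> fsum f F = fsum f G"
      using drop_zeros by (metis finite_Int)
  qed
qed

lemma has_psum_finite:
  assumes "finite S"
  shows "has_psum A f S u \<longleftrightarrow> fsum f S = Some u"
proof
  assume sum: "has_psum A f S u"
  then obtain s where s: "fsum f S = Some s" "nle A s u"
    using has_psum_le[OF _ assms] by blast
  have "nle A u s"
  proof (rule has_psum_least[OF sum])
    fix F s'
    assume "finite F" "F \<subseteq> S" "fsum f F = Some s'"
    then show "nle A s' s"
      using fsum_subset[OF assms \<open>F \<subseteq> S\<close> s(1)] by simp
  qed
  with s show "fsum f S = Some u"
    using nle_antisym by simp
next
  assume u: "fsum f S = Some u"
  show "has_psum A f S u"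
  proof (rule has_psum_intro)
    fix F
    assume "finite F" "F \<subseteq> S"
    then show "\<exists>s. fsum f F = Some s \<and> nle A s u"
      using fsum_subset[OF assms _ u] by simp
  next
    fix v
    assume "\<And>F s. finite F \<Longrightarrow> F \<subseteq> S \<Longrightarrow> fsum f F = Some s \<Longrightarrow> nle A s v"
    from this[OF assms order_refl u] show "nle A u v" .
  qed
qed

lemma has_psum_zero:
  assumes "\<And>x. x \<in> S \<Longrightarrow> f x = pzero A"
  shows "has_psum A f S (pzero A)"
proof -
  have "S \<inter> {x. f x \<noteq> pzero A} = {} \<inter> {x. f x \<noteq> pzero A}"
    using assms by blast
  then have "has_psum A f S (pzero A) \<longleftrightarrow> has_psum A f {} (pzero A)"
    by (rule has_psum_nonzero_cong)
  then show ?thesis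
    using has_psum_finite[of "{}" f] by simp
qed

lemma has_psum_image:
  assumes sum: "has_psum A f S u"
    and fsum_h: "\<And>F s. finite F \<Longrightarrow> fsum f F = Some s \<Longrightarrow> fsum (\<lambda>x. h (f x)) F = Some (h s)"
    and lub_h: "\<And>D v. directed A D \<Longrightarrow> is_lub A D v \<Longrightarrow> is_lub A (h ` D) (h v)"
  shows "has_psum A (\<lambda>x. h (f x)) S (h u)"
proof -
  have defined: "\<forall>F. finite F \<and> F \<subseteq> S \<longrightarrow> fsum f F \<noteq> None"
    and lub: "is_lub A (psums f S) u"
    using sum unfolding has_psum_iff by auto
  have "psums (\<lambda>x. h (f x)) S = h ` psums f S"
  proof (intro set_eqI iffI)
    fix t
    assume "t \<in> psums (\<lambda>x. h (f x)) S"
    then obtain F where F: "finite F" "F \<subseteq> S" "fsum (\<lambda>x. h (f x)) F = Some t"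
      by (rule psumsE)
    moreover obtain s where s: "fsum f F = Some s"
      using defined F by auto
    ultimately have "t = h s"
      using fsum_h by simp
    then show "t \<in> h ` psums f S"
      using psumsI[OF F(1,2) s] by blast
  next
    fix t
    assume "t \<in> h ` psums f S"
    then obtain s F where "t = h s" and F: "finite F" "F \<subseteq> S" "fsum f F = Some s"
      by (auto elim: psumsE)
    then show "t \<in> psums (\<lambda>x. h (f x)) S"
      using psumsI[OF F(1,2) fsum_h[OF F(1,3)]] by simp
  qed
  moreover have "\<forall>F. finite F \<and> F \<subseteq> S \<longrightarrow> fsum (\<lambda>x. h (f x)) F \<noteq> None"
    using defined fsum_h by fastforce
  ultimately show ?thesis
    using lub_h[OF psums_directed[OF defined] lub] unfolding has_psum_iff by simp
qed

lemma has_psum_pmul_left: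
  assumes "has_psum A f S u"
  shows "has_psum A (\<lambda>x. pmul A c (f x)) S (pmul A c u)"
proof (rule has_psum_image[OF assms])
  show "fsum (\<lambda>x. pmul A c (f x)) F = Some (pmul A c s)" if "finite F" "fsum f F = Some s" for F s
    using fsum_pmul_left[OF that] .
  show "is_lub A (pmul A c ` D) (pmul A c v)" if "directed A D" "is_lub A D v" for D v
    using is_lub_pmul[OF that] by (rule conjunct1)
qed

lemma has_psum_pmul_right:
  assumes "has_psum A f S u"
  shows "has_psum A (\<lambda>x. pmul A (f x) c) S (pmul A u c)"
proof (rule has_psum_image[OF assms])
  show "fsum (\<lambda>x. pmul A (f x) c) F = Some (pmul A s c)" if "finite F" "fsum f F = Some s" for F s
    using fsum_pmul_right[OF that] .
  show "is_lub A ((\<lambda>d. pmul A d c) ` D) (pmul A v c)" if "directed A D" "is_lub A D v" for D v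
    using is_lub_pmul[OF that] by (rule conjunct2)
qed

lemma has_psum_dominated:
  assumes "\<And>x. x \<in> S \<Longrightarrow> nle A (g x) (h x)" and "has_psum A h S v"
  shows "\<exists>u. has_psum A g S u \<and> nle A u v"
proof (rule has_psum_exists_le)
  fix F
  assume F: "finite F" "F \<subseteq> S"
  then obtain t where t: "fsum h F = Some t" "nle A t v"
    using has_psum_le[OF assms(2)] by blast
  moreover have "\<And>x. x \<in> F \<Longrightarrow> nle A (g x) (h x)"
    using F(2) assms(1) by blast
  ultimately obtain s where "fsum g F = Some s" "nle A s t"
    using fsum_mono[OF F(1)] by blast
  with t(2) show "\<exists>s. fsum g F = Some s \<and> nle A s v"
    using nle_trans by blast
qed

lemma has_psum_reindex:
  assumes "bij_betw h T S" and "has_psum A f S u"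
  shows "has_psum A (\<lambda>x. f (h x)) T u"
proof -
  have image: "fsum f (h ` F) = fsum (\<lambda>x. f (h x)) F" if "F \<subseteq> T" for F
  proof -
    have "inj_on h F"
      using that assms(1) inj_on_subset unfolding bij_betw_def by blast
    then show ?thesis
      using osum.reindex[of h F "\<lambda>x. Some (f x)"] by (simp add: comp_def)
  qed
  have "has_psum A (\<lambda>x. f (h x)) T u \<longleftrightarrow> has_psum A f S u"
  proof (rule has_psum_same_psums)
    fix F
    assume "finite F" "F \<subseteq> T"
    then show "\<exists>G. finite G \<and> G \<subseteq> S \<and> fsum (\<lambda>x. f (h x)) F = fsum f G"
      using image assms(1) by (intro exI[of _ "h ` F"]) (auto simp: bij_betw_def)
  next
    fix G
    assume G: "finite G" "G \<subseteq> S"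
    define F where "F = T \<inter> h -` G"
    have "h ` F = G" "F \<subseteq> T"
      using G assms(1) unfolding F_def bij_betw_def by auto
    moreover have "finite F"
      using G \<open>h ` F = G\<close> \<open>F \<subseteq> T\<close> assms(1)
      by (metis bij_betw_def finite_imageD inj_on_subset)
    ultimately show "\<exists>F. finite F \<and> F \<subseteq> T \<and> fsum (\<lambda>x. f (h x)) F = fsum f G"
      using image by metis
  qed
  with assms(2) show ?thesis
    by simp
qed

lemma has_psum_swap_pairs:
  assumes "has_psum A (\<lambda>(i, j). a i j) (I \<times> J) s"
  shows "has_psum A (\<lambda>(j, i). a i j) (J \<times> I) s"
proof -
  have "bij_betw (\<lambda>(j, i). (i, j)) (J \<times> I) (I \<times> J)"
    by (rule bij_betw_byWitness[of _ "\<lambda>(i, j). (j, i)"]) auto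
  from has_psum_reindex[OF this assms] show ?thesis
    by (simp add: case_prod_beta')
qed

section \<open>Fubini's theorem\<close>

text \<open>This is where continuity of addition is used.\<close>

lemma oadd_lub_le:
  assumes "directed A D" and "is_lub A D u"
    and bound: "\<And>x. x \<in> D \<Longrightarrow> \<exists>y. oadd A (Some x) c = Some y \<and> nle A y v"
  shows "\<exists>y. oadd A (Some u) c = Some y \<and> nle A y v"
proof -
  obtain x0 where "x0 \<in> D"
    using assms(1) unfolding directed_def by blast
  then obtain c' where c': "c = Some c'"
    using bound by (blast dest: oadd_eq_SomeD)
  have "\<forall>x\<in>D. padd A x c' \<noteq> None"
    using bound c' by fastforce
  then obtain s where s: "padd A u c' = Some s"
    and s_lub: "is_lub A ((\<lambda>x. the (padd A x c')) ` D) s"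
    using is_lub_padd[OF assms(1,2)] by blast
  have "\<forall>z\<in>(\<lambda>x. the (padd A x c')) ` D. nle A z v"
    using bound c' by fastforce
  with s_lub have "nle A s v"
    unfolding is_lub_def by blast
  with s c' show ?thesis
    by simp
qed

text \<open>The offset \<open>b\<close> strengthens the induction hypothesis.\<close>

lemma fsum_lub_le:
  assumes "finite G"
    and "\<And>i. i \<in> G \<Longrightarrow> directed A (D i) \<and> is_lub A (D i) (u i)"
    and "\<And>d. (\<And>i. i \<in> G \<Longrightarrow> d i \<in> D i) \<Longrightarrow> \<exists>x. oadd A b (fsum d G) = Some x \<and> nle A x v"
  shows "\<exists>x. oadd A b (fsum u G) = Some x \<and> nle A x v"
  using assms
proof (induction G arbitrary: b rule: finite_induct)
  case empty
  then show ?case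
    using empty.prems(2)[of u] by simp
next
  case (insert i G)
  have insert_eq: "fsum d (insert i G) = oadd A (Some (d i)) (fsum d G)" for d :: "'a \<Rightarrow> 'u"
    using insert.hyps by simp
  have shifted: "\<exists>y. oadd A (Some x) (oadd A b (fsum u G)) = Some y \<and> nle A y v"
    if x: "x \<in> D i" for x
  proof -
    have "\<exists>y. oadd A (oadd A b (Some x)) (fsum u G) = Some y \<and> nle A y v"
    proof (rule insert.IH)
      show "directed A (D j) \<and> is_lub A (D j) (u j)" if "j \<in> G" for j
        using insert.prems(1) that by blast
    next
      fix d
      assume d: "\<And>j. j \<in> G \<Longrightarrow> d j \<in> D j"
      have "fsum (d(i := x)) G = fsum d G"
        using insert.hyps(2) by (intro osum.cong) auto
      then have "oadd A (oadd A b (Some x)) (fsum d G) = oadd A b (fsum (d(i := x)) (insert i G))"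
        by (simp add: insert_eq osum.assoc)
      moreover have "\<exists>y. oadd A b (fsum (d(i := x)) (insert i G)) = Some y \<and> nle A y v"
        using d x by (intro insert.prems(2)) auto
      ultimately show "\<exists>y. oadd A (oadd A b (Some x)) (fsum d G) = Some y \<and> nle A y v"
        by simp
    qed
    then show ?thesis
      by (metis osum.assoc osum.left_commute)
  qed
  have "directed A (D i)" "is_lub A (D i) (u i)"
    using insert.prems(1) by auto
  from oadd_lub_le[OF this shifted] show ?case
    unfolding insert_eq by (simp only: osum.left_commute)
qed

lemma fsum_Times_le:
  assumes G: "finite G" "G \<subseteq> I" and H: "finite H" "H \<subseteq> J"
    and inner: "\<And>i. i \<in> I \<Longrightarrow> has_psum A (a i) J (s i)"
    and outer: "fsum s G = Some t"
  shows "\<exists>x. fsum (\<lambda>(i, j). a i j) (G \<times> H) = Some x \<and> nle A x t"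
proof -
  define r where "r i = the (fsum (a i) H)" for i
  have r: "fsum (a i) H = Some (r i) \<and> nle A (r i) (s i)" if i: "i \<in> G" for i
  proof -
    obtain x where "fsum (a i) H = Some x" "nle A x (s i)"
      using has_psum_le[OF inner H] i G(2) by blast
    then show ?thesis
      unfolding r_def by simp
  qed
  then obtain x where x: "fsum r G = Some x" "nle A x t"
    using fsum_mono[OF G(1) _ outer, of r] by blast
  have "osum.F (\<lambda>i. fsum (a i) H) G = fsum r G"
    using r by (intro osum.cong) auto
  with x show ?thesis
    using fsum_Times[OF G(1) H(1), of a] by simp
qed

lemma psums_le_fsum_Times:
  assumes G: "finite G" "G \<subseteq> I"
    and inner: "\<And>i. i \<in> I \<Longrightarrow> has_psum A (a i) J (s i)"
    and d: "\<And>i. i \<in> G \<Longrightarrow> d i \<in> psums (a i) J"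
  shows "\<exists>H. finite H \<and> H \<subseteq> J \<and>
    (\<forall>x. fsum (\<lambda>(i, j). a i j) (G \<times> H) = Some x \<longrightarrow> (\<exists>y. fsum d G = Some y \<and> nle A y x))"
proof -
  have "\<forall>i\<in>G. \<exists>H. finite H \<and> H \<subseteq> J \<and> fsum (a i) H = Some (d i)"
    using d unfolding psums_def by blast
  then obtain Hs
    where Hs: "\<And>i. i \<in> G \<Longrightarrow> finite (Hs i) \<and> Hs i \<subseteq> J \<and> fsum (a i) (Hs i) = Some (d i)"
    by metis
  define H where "H = (\<Union>i\<in>G. Hs i)"
  have H: "finite H" "H \<subseteq> J"
    using Hs G(1) unfolding H_def by auto
  define r where "r i = the (fsum (a i) H)" for i
  have r: "fsum (a i) H = Some (r i) \<and> nle A (d i) (r i)" if "i \<in> G" for i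
  proof -
    have "fsum (a i) H \<noteq> None"
      using has_psum_le[OF inner H] that G(2) by blast
    then have ri: "fsum (a i) H = Some (r i)"
      unfolding r_def by auto
    moreover have "Hs i \<subseteq> H"
      using that unfolding H_def by blast
    ultimately show ?thesis
      using fsum_subset[OF H(1) _ ri, of "Hs i"] Hs[OF that] by auto
  qed
  have "\<exists>y. fsum d G = Some y \<and> nle A y x" if x: "fsum (\<lambda>(i, j). a i j) (G \<times> H) = Some x" for x
  proof -
    have "osum.F (\<lambda>i. fsum (a i) H) G = fsum r G"
      using r by (intro osum.cong) auto
    then have "fsum r G = Some x"
      using x fsum_Times[OF G(1) H(1), of a] by simp
    then show ?thesis
      using fsum_mono[OF G(1)] r by blast
  qed
  with H show ?thesis
    by blast
qed

lemma fsum_le_inner_sums: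
  assumes G: "finite G" "G \<subseteq> I"
    and inner: "\<And>i. i \<in> I \<Longrightarrow> has_psum A (a i) J (s i)"
    and bound: "\<And>H. finite H \<Longrightarrow> H \<subseteq> J \<Longrightarrow> \<exists>x. fsum (\<lambda>(i, j). a i j) (G \<times> H) = Some x \<and> nle A x v"
  shows "\<exists>t. fsum s G = Some t \<and> nle A t v"
proof -
  have "\<exists>x. oadd A (Some (pzero A)) (fsum s G) = Some x \<and> nle A x v"
  proof (rule fsum_lub_le[OF G(1), of "\<lambda>i. psums (a i) J"])
    fix i
    assume "i \<in> G"
    then have "has_psum A (a i) J (s i)"
      using G(2) inner by blast
    then show "directed A (psums (a i) J) \<and> is_lub A (psums (a i) J) (s i)"
      unfolding has_psum_iff using psums_directed by blast
  next
    fix d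
    assume d: "\<And>i. i \<in> G \<Longrightarrow> d i \<in> psums (a i) J"
    obtain H where H: "finite H" "H \<subseteq> J"
      and le: "\<forall>x. fsum (\<lambda>(i, j). a i j) (G \<times> H) = Some x \<longrightarrow> (\<exists>y. fsum d G = Some y \<and> nle A y x)"
      using psums_le_fsum_Times[of G I a J s d, OF G inner d] by blast
    obtain x where x: "fsum (\<lambda>(i, j). a i j) (G \<times> H) = Some x" "nle A x v"
      using bound[OF H] by blast
    obtain y where "fsum d G = Some y" "nle A y x"
      using le[rule_format, OF x(1)] by blast
    with x(2) show "\<exists>y. oadd A (Some (pzero A)) (fsum d G) = Some y \<and> nle A y v"
      using nle_trans by auto
  qed
  then show ?thesis
    by simp
qed

lemma fsum_le_fsum_inner_sums:
  assumes F: "finite F" "F \<subseteq> I \<times> J"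
    and inner: "\<And>i. i \<in> I \<Longrightarrow> has_psum A (a i) J (s i)"
    and outer: "fsum s (fst ` F) = Some t"
  shows "\<exists>y. fsum (\<lambda>(i, j). a i j) F = Some y \<and> nle A y t"
proof -
  have G: "finite (fst ` F)" "fst ` F \<subseteq> I" and H: "finite (snd ` F)" "snd ` F \<subseteq> J"
    using F by auto
  obtain x where x: "fsum (\<lambda>(i, j). a i j) (fst ` F \<times> snd ` F) = Some x" "nle A x t"
    using fsum_Times_le[OF G H inner outer] by blast
  have "F \<subseteq> fst ` F \<times> snd ` F"
    by force
  then obtain y where "fsum (\<lambda>(i, j). a i j) F = Some y" "nle A y x"
    using fsum_subset[OF _ _ x(1)] G(1) H(1) by blast
  with x(2) show ?thesis
    using nle_trans by blast
qed

lemma has_psum_Times: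
  assumes inner: "\<And>i. i \<in> I \<Longrightarrow> has_psum A (a i) J (s i)"
    and outer: "has_psum A s I t"
  shows "has_psum A (\<lambda>(i, j). a i j) (I \<times> J) t"
proof (rule has_psum_intro)
  fix F
  assume F: "finite F" "F \<subseteq> I \<times> J"
  then have "finite (fst ` F)" "fst ` F \<subseteq> I"
    by auto
  then obtain \<sigma> where \<sigma>: "fsum s (fst ` F) = Some \<sigma>" "nle A \<sigma> t"
    using has_psum_le[OF outer] by blast
  moreover obtain y where "fsum (\<lambda>(i, j). a i j) F = Some y" "nle A y \<sigma>"
    using fsum_le_fsum_inner_sums[OF F inner \<sigma>(1)] by blast
  ultimately show "\<exists>y. fsum (\<lambda>(i, j). a i j) F = Some y \<and> nle A y t"
    using nle_trans by blast
next
  fix v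
  assume v: "\<And>F y. finite F \<Longrightarrow> F \<subseteq> I \<times> J \<Longrightarrow> fsum (\<lambda>(i, j). a i j) F = Some y \<Longrightarrow> nle A y v"
  show "nle A t v"
  proof (rule has_psum_least[OF outer])
    fix G \<sigma>
    assume G: "finite G" "G \<subseteq> I" "fsum s G = Some \<sigma>"
    have "\<exists>\<sigma>'. fsum s G = Some \<sigma>' \<and> nle A \<sigma>' v"
    proof (rule fsum_le_inner_sums[OF G(1,2) inner])
      fix H
      assume H: "finite H" "H \<subseteq> J"
      then have GH: "finite (G \<times> H)" "G \<times> H \<subseteq> I \<times> J"
        using G by auto
      obtain x where "fsum (\<lambda>(i, j). a i j) (G \<times> H) = Some x"
        using fsum_Times_le[OF G(1,2) H inner G(3)] by blast
      then show "\<exists>x. fsum (\<lambda>(i, j). a i j) (G \<times> H) = Some x \<and> nle A x v"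
        using v[OF GH] by blast
    qed
    with G(3) show "nle A \<sigma> v"
      by simp
  qed
qed

lemma has_psum_TimesD:
  assumes joint: "has_psum A (\<lambda>(i, j). a i j) (I \<times> J) t"
    and inner: "\<And>i. i \<in> I \<Longrightarrow> has_psum A (a i) J (s i)"
  shows "has_psum A s I t"
proof -
  have partial: "\<exists>\<sigma>. fsum s G = Some \<sigma> \<and> nle A \<sigma> t" if G: "finite G" "G \<subseteq> I" for G
  proof (rule fsum_le_inner_sums[OF G inner])
    fix H
    assume "finite H" "H \<subseteq> J"
    with G have "finite (G \<times> H)" "G \<times> H \<subseteq> I \<times> J"
      by auto
    then show "\<exists>x. fsum (\<lambda>(i, j). a i j) (G \<times> H) = Some x \<and> nle A x t"
      by (rule has_psum_le[OF joint])
  qed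
  show ?thesis
  proof (rule has_psum_intro[OF partial])
    fix v
    assume v: "\<And>G \<sigma>. finite G \<Longrightarrow> G \<subseteq> I \<Longrightarrow> fsum s G = Some \<sigma> \<Longrightarrow> nle A \<sigma> v"
    show "nle A t v"
    proof (rule has_psum_least[OF joint])
      fix F y
      assume F: "finite F" "F \<subseteq> I \<times> J" and y: "fsum (\<lambda>(i, j). a i j) F = Some y"
      then have G: "finite (fst ` F)" "fst ` F \<subseteq> I"
        by auto
      then obtain \<sigma> where \<sigma>: "fsum s (fst ` F) = Some \<sigma>"
        using partial by blast
      obtain y' where "fsum (\<lambda>(i, j). a i j) F = Some y'" "nle A y' \<sigma>"
        using fsum_le_fsum_inner_sums[OF F inner \<sigma>] by blast
      with y have "nle A y \<sigma>"
        by simp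
      with v[OF G \<sigma>] show "nle A y v"
        using nle_trans by blast
    qed
  qed
qed

lemma has_psum_swap:
  assumes "\<And>i. i \<in> I \<Longrightarrow> has_psum A (\<lambda>j. a i j) J (s i)" and "has_psum A s I t"
    and "\<And>j. j \<in> J \<Longrightarrow> has_psum A (\<lambda>i. a i j) I (r j)"
  shows "has_psum A r J t"
proof -
  have "has_psum A (\<lambda>(j, i). a i j) (J \<times> I) t"
    using has_psum_swap_pairs[OF has_psum_Times[OF assms(1,2)]] .
  then show ?thesis
    using has_psum_TimesD[of "\<lambda>j i. a i j" J I t r, OF _ assms(3)] by simp
qed

text \<open>This is where the top element is used.\<close>

lemma has_psum_weighted_exists:
  assumes "has_psum A m S M"
  shows "\<exists>u. has_psum A (\<lambda>x. pmul A (m x) (f x)) S u"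
proof -
  obtain T where T: "\<And>a. nle A a T"
    using top_exists by blast
  have "nle A (pmul A (m x) (f x)) (pmul A (m x) T)" for x
    using pmul_mono_left[OF T] .
  with has_psum_pmul_right[OF assms] show ?thesis
    using has_psum_dominated by meson
qed

end

section \<open>Weighted collections and the Kleisli extension\<close>

definition lift_W :: "'u psemiring \<Rightarrow> ('s \<Rightarrow> 'u option) \<Rightarrow> ('s \<Rightarrow> 'u) option" where
  "lift_W A g =
     (if (\<forall>\<tau>. g \<tau> \<noteq> None) \<and> inW A (\<lambda>\<tau>. the (g \<tau>)) then Some (\<lambda>\<tau>. the (g \<tau>)) else None)"

lemma wadd_eq_lift_W: "wadd A m1 m2 = lift_W A (\<lambda>\<tau>. padd A (m1 \<tau>) (m2 \<tau>))"
  unfolding wadd_def lift_W_def ..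

context good_psemiring
begin

lemma has_psum_supp_iff: "has_psum A m (supp A m) u \<longleftrightarrow> has_psum A m UNIV u"
  by (rule has_psum_nonzero_cong) (auto simp: supp_def)

lemma has_psum_single_support:
  assumes "\<And>y. y \<noteq> x \<Longrightarrow> f y = pzero A"
  shows "has_psum A f UNIV (f x)"
proof -
  have "{x} \<inter> {y. f y \<noteq> pzero A} = UNIV \<inter> {y. f y \<noteq> pzero A}"
    using assms by blast
  then have "has_psum A f {x} (f x) \<longleftrightarrow> has_psum A f UNIV (f x)"
    by (rule has_psum_nonzero_cong)
  then show ?thesis
    using has_psum_finite[of "{x}" f] by simp
qed

lemma inW_iff: "inW A m \<longleftrightarrow> countable (supp A m) \<and> (\<exists>M. has_psum A m UNIV M)"
  unfolding inW_def by (simp add: not_None_eq psum_eq_Some_iff has_psum_supp_iff)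

lemma inW_dominated:
  assumes "\<And>\<tau>. nle A (g \<tau>) (h \<tau>)" and "inW A h"
  shows "inW A g"
proof -
  obtain H where H: "has_psum A h UNIV H" and countable: "countable (supp A h)"
    using assms(2) unfolding inW_iff by blast
  have "supp A g \<subseteq> supp A h"
  proof
    fix \<tau>
    assume "\<tau> \<in> supp A g"
    then show "\<tau> \<in> supp A h"
      using assms(1)[of \<tau>] nle_zero unfolding supp_def by auto
  qed
  with countable have "countable (supp A g)"
    by (rule countable_subset[rotated])
  moreover obtain u where "has_psum A g UNIV u"
    using has_psum_dominated[OF assms(1) H] by blast
  ultimately show ?thesis
    unfolding inW_iff by blast
qed

lemma inW_eta: "inW A (eta A \<sigma>)"
proof -
  have "supp A (eta A \<sigma>) \<subseteq> {\<sigma>}"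
    unfolding supp_def eta_def by auto
  then have "countable (supp A (eta A \<sigma>))"
    by (rule countable_subset) simp
  moreover have "has_psum A (eta A \<sigma>) UNIV (eta A \<sigma> \<sigma>)"
    by (rule has_psum_single_support) (simp add: eta_def)
  ultimately show ?thesis
    unfolding inW_iff by blast
qed

lemma inW_wscale:
  assumes "inW A m"
  shows "inW A (wscale A a m)"
proof -
  obtain M where M: "has_psum A m UNIV M" and countable: "countable (supp A m)"
    using assms unfolding inW_iff by blast
  have "supp A (wscale A a m) \<subseteq> supp A m"
    unfolding supp_def wscale_def by auto
  with countable have "countable (supp A (wscale A a m))"
    by (rule countable_subset[rotated])
  moreover have "has_psum A (wscale A a m) UNIV (pmul A a M)"
    unfolding wscale_def by (rule has_psum_pmul_left[OF M])
  ultimately show ?thesis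
    unfolding inW_iff by blast
qed

lemma inW_wzero: "inW A (wzero A)"
proof -
  have "supp A (wzero A) = {}"
    unfolding supp_def wzero_def by simp
  moreover have "has_psum A (wzero A) UNIV (pzero A)"
    by (rule has_psum_zero) (simp add: wzero_def)
  ultimately show ?thesis
    unfolding inW_iff by (metis countable_empty)
qed

lemma lift_W_eq_Some_iff: "lift_W A g = Some m \<longleftrightarrow> (\<forall>\<tau>. g \<tau> = Some (m \<tau>)) \<and> inW A m"
proof
  assume "lift_W A g = Some m"
  then have "\<forall>\<tau>. g \<tau> \<noteq> None" and "m = (\<lambda>\<tau>. the (g \<tau>))" and "inW A m"
    unfolding lift_W_def by (auto split: if_splits)
  then show "(\<forall>\<tau>. g \<tau> = Some (m \<tau>)) \<and> inW A m"
    by auto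
next
  assume "(\<forall>\<tau>. g \<tau> = Some (m \<tau>)) \<and> inW A m"
  then show "lift_W A g = Some m"
    unfolding lift_W_def by simp
qed

text \<open>If a pointwise sum is a weighted collection, so are its summands, by domination.\<close>

lemma lift_W_oadd_None:
  assumes "lift_W A g = None"
  shows "lift_W A (\<lambda>\<tau>. oadd A (g \<tau>) (h \<tau>)) = None"
proof (rule ccontr)
  assume "lift_W A (\<lambda>\<tau>. oadd A (g \<tau>) (h \<tau>)) \<noteq> None"
  then obtain m where "lift_W A (\<lambda>\<tau>. oadd A (g \<tau>) (h \<tau>)) = Some m"
    by blast
  then have m: "\<And>\<tau>. oadd A (g \<tau>) (h \<tau>) = Some (m \<tau>)" and "inW A m"
    unfolding lift_W_eq_Some_iff by auto
  have "\<exists>a. g \<tau> = Some a \<and> nle A a (m \<tau>)" for \<tau>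
    using oadd_eq_SomeD[OF m[of \<tau>]] padd_nle_left by blast
  then obtain a where a: "\<And>\<tau>. g \<tau> = Some (a \<tau>)" and "\<And>\<tau>. nle A (a \<tau>) (m \<tau>)"
    by metis
  then have "inW A a"
    using inW_dominated \<open>inW A m\<close> by blast
  with a have "lift_W A g = Some a"
    unfolding lift_W_eq_Some_iff by blast
  with assms show False
    by simp
qed

end

text \<open>The paper's \<open>f\<^sup>\<dagger>(m)\<close> with the definedness test dropped; by \<open>bind_eq_dagger\<close> it agrees
  with \<^const>\<open>bind\<close> on weighted collections.\<close>

definition dagger :: "'u psemiring \<Rightarrow> ('s \<Rightarrow> 's \<Rightarrow> 'u) \<Rightarrow> ('s \<Rightarrow> 'u) \<Rightarrow> 's \<Rightarrow> 'u" where
  "dagger A f m = (\<lambda>\<tau>. the (psum A (\<lambda>\<sigma>. pmul A (m \<sigma>) (f \<sigma> \<tau>)) (supp A m)))"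

definition W_kernel :: "'u psemiring \<Rightarrow> ('s \<Rightarrow> 's \<Rightarrow> 'u) \<Rightarrow> bool" where
  "W_kernel A f \<longleftrightarrow> (\<forall>\<sigma>. inW A (f \<sigma>))"

context good_psemiring
begin

lemma has_psum_weighted_supp_iff:
  "has_psum A (\<lambda>\<sigma>. pmul A (m \<sigma>) (g \<sigma>)) (supp A m) u \<longleftrightarrow>
     has_psum A (\<lambda>\<sigma>. pmul A (m \<sigma>) (g \<sigma>)) UNIV u"
  by (rule has_psum_nonzero_cong) (auto simp: supp_def)

lemma psum_dagger:
  assumes "inW A m"
  shows "psum A (\<lambda>\<sigma>. pmul A (m \<sigma>) (f \<sigma> \<tau>)) (supp A m) = Some (dagger A f m \<tau>)"
proof -
  obtain M where M: "has_psum A m UNIV M"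
    using assms unfolding inW_iff by blast
  obtain u where "has_psum A (\<lambda>\<sigma>. pmul A (m \<sigma>) (f \<sigma> \<tau>)) UNIV u"
    using has_psum_weighted_exists[OF M, of "\<lambda>\<sigma>. f \<sigma> \<tau>"] by blast
  then have "psum A (\<lambda>\<sigma>. pmul A (m \<sigma>) (f \<sigma> \<tau>)) (supp A m) = Some u"
    unfolding psum_eq_Some_iff has_psum_weighted_supp_iff .
  then show ?thesis
    unfolding dagger_def by simp
qed

lemma has_psum_dagger:
  assumes "inW A m"
  shows "has_psum A (\<lambda>\<sigma>. pmul A (m \<sigma>) (f \<sigma> \<tau>)) UNIV (dagger A f m \<tau>)"
  using psum_dagger[OF assms] unfolding psum_eq_Some_iff has_psum_weighted_supp_iff .

lemma dagger_eqI:
  assumes "inW A m" and "\<And>\<tau>. has_psum A (\<lambda>\<sigma>. pmul A (m \<sigma>) (f \<sigma> \<tau>)) UNIV (r \<tau>)"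
  shows "dagger A f m = r"
  using has_psum_unique[OF has_psum_dagger[OF assms(1)] assms(2)] by (rule ext)

lemma supp_dagger:
  assumes "inW A m"
  shows "supp A (dagger A f m) \<subseteq> (\<Union>\<sigma>\<in>supp A m. supp A (f \<sigma>))"
proof (rule subsetI, rule ccontr)
  fix \<tau>
  assume "\<tau> \<in> supp A (dagger A f m)" and "\<tau> \<notin> (\<Union>\<sigma>\<in>supp A m. supp A (f \<sigma>))"
  moreover from this(2) have "pmul A (m \<sigma>) (f \<sigma> \<tau>) = pzero A" for \<sigma>
    unfolding supp_def by (cases "m \<sigma> = pzero A") auto
  then have "dagger A f m \<tau> = pzero A"
    using has_psum_unique[OF has_psum_dagger[OF assms] has_psum_zero] by blast
  ultimately show False
    unfolding supp_def by simp
qed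

lemma has_psum_dagger_mass:
  assumes m: "inW A m" and mass: "\<And>\<sigma>. has_psum A (f \<sigma>) UNIV (mass \<sigma>)"
    and X: "has_psum A (\<lambda>\<sigma>. pmul A (m \<sigma>) (mass \<sigma>)) UNIV X"
  shows "has_psum A (dagger A f m) UNIV X"
proof (rule has_psum_swap[of UNIV "\<lambda>\<sigma> \<tau>. pmul A (m \<sigma>) (f \<sigma> \<tau>)"])
  fix \<sigma>
  show "has_psum A (\<lambda>\<tau>. pmul A (m \<sigma>) (f \<sigma> \<tau>)) UNIV (pmul A (m \<sigma>) (mass \<sigma>))"
    by (rule has_psum_pmul_left[OF mass])
next
  show "has_psum A (\<lambda>\<sigma>. pmul A (m \<sigma>) (mass \<sigma>)) UNIV X"
    by (rule X)
next
  fix \<tau>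
  show "has_psum A (\<lambda>\<sigma>. pmul A (m \<sigma>) (f \<sigma> \<tau>)) UNIV (dagger A f m \<tau>)"
    by (rule has_psum_dagger[OF m])
qed

lemma inW_dagger:
  assumes m: "inW A m" and f: "W_kernel A f"
  shows "inW A (dagger A f m)"
proof -
  have "countable (\<Union>\<sigma>\<in>supp A m. supp A (f \<sigma>))"
    using m f unfolding W_kernel_def inW_iff by blast
  then have "countable (supp A (dagger A f m))"
    using supp_dagger[OF m] by (rule countable_subset[rotated])
  moreover obtain mass where mass: "\<And>\<sigma>. has_psum A (f \<sigma>) UNIV (mass \<sigma>)"
    using f unfolding W_kernel_def inW_iff by metis
  moreover obtain M where "has_psum A m UNIV M"
    using m unfolding inW_iff by blast
  then obtain X where "has_psum A (\<lambda>\<sigma>. pmul A (m \<sigma>) (mass \<sigma>)) UNIV X"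
    using has_psum_weighted_exists by blast
  ultimately show ?thesis
    unfolding inW_iff using has_psum_dagger_mass[OF m] by blast
qed

lemma bind_eq_dagger:
  assumes "inW A m" and "W_kernel A f"
  shows "bind A f m = Some (dagger A f m)"
proof -
  have "\<forall>\<tau>. psum A (\<lambda>\<sigma>. pmul A (m \<sigma>) (f \<sigma> \<tau>)) (supp A m) \<noteq> None"
    using psum_dagger[OF assms(1)] by simp
  with inW_dagger[OF assms] show ?thesis
    unfolding bind_def Let_def dagger_def by simp
qed

lemma dagger_eta_left: "dagger A f (eta A \<sigma>) = f \<sigma>"
proof (rule dagger_eqI[OF inW_eta])
  fix \<tau>
  show "has_psum A (\<lambda>\<rho>. pmul A (eta A \<sigma> \<rho>) (f \<rho> \<tau>)) UNIV (f \<sigma> \<tau>)"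
    using has_psum_single_support[of \<sigma> "\<lambda>\<rho>. pmul A (eta A \<sigma> \<rho>) (f \<rho> \<tau>)"]
    by (simp add: eta_def)
qed

lemma dagger_eta_right:
  assumes "inW A m"
  shows "dagger A (eta A) m = m"
proof (rule dagger_eqI[OF assms])
  fix \<tau>
  show "has_psum A (\<lambda>\<rho>. pmul A (m \<rho>) (eta A \<rho> \<tau>)) UNIV (m \<tau>)"
    using has_psum_single_support[of \<tau> "\<lambda>\<rho>. pmul A (m \<rho>) (eta A \<rho> \<tau>)"]
    by (simp add: eta_def)
qed

lemma dagger_wscale:
  assumes "inW A m"
  shows "dagger A f (wscale A a m) = wscale A a (dagger A f m)"
proof (rule dagger_eqI[OF inW_wscale[OF assms]])
  fix \<tau>
  show "has_psum A (\<lambda>\<sigma>. pmul A (wscale A a m \<sigma>) (f \<sigma> \<tau>)) UNIV (wscale A a (dagger A f m) \<tau>)"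
    using has_psum_pmul_left[OF has_psum_dagger[OF assms], of a]
    unfolding wscale_def by (simp add: pmul_assoc)
qed

lemma dagger_assoc:
  assumes m: "inW A m" and f: "W_kernel A f"
  shows "dagger A g (dagger A f m) = dagger A (\<lambda>\<sigma>. dagger A g (f \<sigma>)) m"
proof (rule dagger_eqI[OF inW_dagger[OF m f]])
  fix \<tau>
  show "has_psum A (\<lambda>\<rho>. pmul A (dagger A f m \<rho>) (g \<rho> \<tau>)) UNIV (dagger A (\<lambda>\<sigma>. dagger A g (f \<sigma>)) m \<tau>)"
  proof (rule has_psum_swap[of UNIV "\<lambda>\<sigma> \<rho>. pmul A (m \<sigma>) (pmul A (f \<sigma> \<rho>) (g \<rho> \<tau>))"])
    fix \<sigma>
    have "inW A (f \<sigma>)"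
      using f unfolding W_kernel_def by blast
    then show "has_psum A (\<lambda>\<rho>. pmul A (m \<sigma>) (pmul A (f \<sigma> \<rho>) (g \<rho> \<tau>))) UNIV
        (pmul A (m \<sigma>) (dagger A g (f \<sigma>) \<tau>))"
      by (intro has_psum_pmul_left has_psum_dagger)
  next
    show "has_psum A (\<lambda>\<sigma>. pmul A (m \<sigma>) (dagger A g (f \<sigma>) \<tau>)) UNIV
        (dagger A (\<lambda>\<sigma>. dagger A g (f \<sigma>)) m \<tau>)"
      by (rule has_psum_dagger[OF m])
  next
    fix \<rho>
    show "has_psum A (\<lambda>\<sigma>. pmul A (m \<sigma>) (pmul A (f \<sigma> \<rho>) (g \<rho> \<tau>))) UNIV
        (pmul A (dagger A f m \<rho>) (g \<rho> \<tau>))"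
      using has_psum_pmul_right[OF has_psum_dagger[OF m], of f \<rho> "g \<rho> \<tau>"]
      by (simp add: pmul_assoc)
  qed
qed

lemma dagger_fsum:
  assumes m: "inW A m" and K: "finite K"
    and sum: "\<And>\<rho>. fsum (\<lambda>k. f k \<rho> \<tau>) K = Some (F \<rho> \<tau>)"
  shows "fsum (\<lambda>k. dagger A (f k) m \<tau>) K = Some (dagger A F m \<tau>)"
proof -
  have "has_psum A (\<lambda>k. dagger A (f k) m \<tau>) K (dagger A F m \<tau>)"
  proof (rule has_psum_swap[of UNIV "\<lambda>\<rho> k. pmul A (m \<rho>) (f k \<rho> \<tau>)"])
    fix \<rho>
    show "has_psum A (\<lambda>k. pmul A (m \<rho>) (f k \<rho> \<tau>)) K (pmul A (m \<rho>) (F \<rho> \<tau>))"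
      using fsum_pmul_left[OF K sum] has_psum_finite[OF K] by blast
  next
    show "has_psum A (\<lambda>\<rho>. pmul A (m \<rho>) (F \<rho> \<tau>)) UNIV (dagger A F m \<tau>)"
      by (rule has_psum_dagger[OF m])
  next
    fix k
    show "has_psum A (\<lambda>\<rho>. pmul A (m \<rho>) (f k \<rho> \<tau>)) UNIV (dagger A (f k) m \<tau>)"
      by (rule has_psum_dagger[OF m])
  qed
  then show ?thesis
    unfolding has_psum_finite[OF K] .
qed

end

section \<open>Semantics of total programs\<close>

text \<open>Junk unless \<open>P\<close> is total.\<close>

definition ksem :: "'u psemiring \<Rightarrow> ('s, 'u) prog \<Rightarrow> 's \<Rightarrow> 's \<Rightarrow> 'u" where
  "ksem A P = (\<lambda>\<sigma>. the (sem A P \<sigma>))"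

definition unroll :: "('s, 'u) prog \<Rightarrow> ('s, 'u) expr \<Rightarrow> ('s, 'u) expr \<Rightarrow> nat \<Rightarrow> ('s, 'u) prog" where
  "unroll C e e' k = Seq (ppow (Seq (Assume e) C) k) (Assume e')"

lemma total_Skip [simp]: "total_sem A Skip"
  unfolding total_sem_def by simp

lemma total_Assume [simp]: "total_sem A (Assume e)"
  unfolding total_sem_def by simp

lemma ksem_Skip: "ksem A Skip = eta A"
  unfolding ksem_def by simp

lemma ksem_Assume: "ksem A (Assume e) \<sigma> = wscale A (esem A e \<sigma>) (eta A \<sigma>)"
  unfolding ksem_def by simp

lemma sem_eq_ksem: "total_sem A P \<Longrightarrow> sem A P \<sigma> = Some (ksem A P \<sigma>)"
  unfolding total_sem_def ksem_def by auto

context good_psemiring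
begin

lemma sem_inW: "sem A P \<sigma> = Some m \<Longrightarrow> inW A m"
proof (induction P arbitrary: \<sigma> m)
  case Skip
  then have "m = eta A \<sigma>"
    by simp
  then show ?case
    using inW_eta by simp
next
  case (Seq P Q)
  then show ?case
    by (auto simp: bind_def Let_def split: option.splits if_splits)
next
  case (Assume e)
  then have "m = wscale A (esem A e \<sigma>) (eta A \<sigma>)"
    by simp
  then show ?case
    using inW_wscale[OF inW_eta] by simp
next
  case (Atom K)
  then show ?case
    by (simp split: if_splits)
qed

lemma inW_ksem: "total_sem A P \<Longrightarrow> inW A (ksem A P \<sigma>)"
  by (rule sem_inW[OF sem_eq_ksem])

lemma W_kernel_ksem: "total_sem A P \<Longrightarrow> W_kernel A (ksem A P)"
  unfolding W_kernel_def by (simp add: inW_ksem)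

lemma sem_Seq:
  assumes "total_sem A P" and "total_sem A Q"
  shows "sem A (Seq P Q) \<sigma> = Some (dagger A (ksem A Q) (ksem A P \<sigma>))"
  using assms bind_eq_dagger[OF inW_ksem W_kernel_ksem] by (simp add: sem_eq_ksem)

lemma total_Seq:
  assumes "total_sem A P" and "total_sem A Q"
  shows "total_sem A (Seq P Q)"
  unfolding total_sem_def using sem_Seq[OF assms] by (simp del: sem.simps)

lemma ksem_Seq:
  assumes "total_sem A P" and "total_sem A Q"
  shows "ksem A (Seq P Q) = (\<lambda>\<sigma>. dagger A (ksem A Q) (ksem A P \<sigma>))"
  unfolding ksem_def by (simp only: sem_Seq[OF assms] option.sel ksem_def)

lemma total_ppow: "total_sem A D \<Longrightarrow> total_sem A (ppow D k)"
  by (induction k) (simp_all add: total_Seq)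

lemma ksem_Seq_assoc:
  assumes "total_sem A P" and "total_sem A Q" and "total_sem A R"
  shows "ksem A (Seq (Seq P Q) R) = ksem A (Seq P (Seq Q R))"
proof
  fix \<sigma>
  have "ksem A (Seq (Seq P Q) R) \<sigma> = dagger A (ksem A R) (dagger A (ksem A Q) (ksem A P \<sigma>))"
    using assms by (simp add: ksem_Seq total_Seq)
  also have "\<dots> = dagger A (\<lambda>\<rho>. dagger A (ksem A R) (ksem A Q \<rho>)) (ksem A P \<sigma>)"
    using assms by (intro dagger_assoc inW_ksem W_kernel_ksem)
  also have "\<dots> = ksem A (Seq P (Seq Q R)) \<sigma>"
    using assms by (simp add: ksem_Seq total_Seq)
  finally show "ksem A (Seq (Seq P Q) R) \<sigma> = ksem A (Seq P (Seq Q R)) \<sigma>" .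
qed

text \<open>\<^const>\<open>ppow\<close> appends the body on the right; unrolling the loop needs it on the left.\<close>

lemma ksem_ppow_Suc:
  assumes D: "total_sem A D"
  shows "ksem A (ppow D (Suc k)) = ksem A (Seq D (ppow D k))"
proof (induction k)
  case 0
  show ?case
    using D inW_ksem[OF D] W_kernel_ksem[OF D]
    by (simp add: ksem_Seq ksem_Skip dagger_eta_left dagger_eta_right)
next
  case (Suc k)
  have "ksem A (ppow D (Suc (Suc k))) = ksem A (Seq (Seq D (ppow D k)) D)"
    using Suc D total_ppow[OF D] by (simp add: ksem_Seq total_Seq)
  also have "\<dots> = ksem A (Seq D (ppow D (Suc k)))"
    using D total_ppow[OF D] by (simp add: ksem_Seq_assoc)
  finally show ?case .
qed

lemma total_unroll: "total_sem A C \<Longrightarrow> total_sem A (unroll C e e' k)"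
  unfolding unroll_def by (simp add: total_Seq total_ppow)

lemma ksem_unroll_0: "ksem A (unroll C e e' 0) \<sigma> = wscale A (esem A e' \<sigma>) (eta A \<sigma>)"
  unfolding unroll_def by (simp add: ksem_Seq ksem_Skip dagger_eta_left ksem_Assume)

lemma ksem_unroll_Suc:
  assumes C: "total_sem A C"
  shows "ksem A (unroll C e e' (Suc k)) \<sigma>
    = wscale A (esem A e \<sigma>) (dagger A (ksem A (unroll C e e' k)) (ksem A C \<sigma>))"
proof -
  define D where "D = Seq (Assume e) C"
  have D: "total_sem A D"
    unfolding D_def using C by (simp add: total_Seq)
  have "ksem A (unroll C e e' (Suc k)) = ksem A (Seq (Seq D (ppow D k)) (Assume e'))"
    unfolding unroll_def D_def[symmetric]
    using D total_ppow[OF D] ksem_ppow_Suc[OF D] by (simp add: ksem_Seq total_Seq)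
  also have "\<dots> = ksem A (Seq D (unroll C e e' k))"
    unfolding unroll_def D_def[symmetric] using D total_ppow[OF D] by (simp add: ksem_Seq_assoc)
  finally have "ksem A (unroll C e e' (Suc k)) \<sigma> = dagger A (ksem A (unroll C e e' k)) (ksem A D \<sigma>)"
    using D total_unroll[OF C] by (simp add: ksem_Seq)
  moreover have "ksem A D \<sigma> = wscale A (esem A e \<sigma>) (ksem A C \<sigma>)"
    unfolding D_def using C by (simp add: ksem_Seq ksem_Assume dagger_wscale inW_eta dagger_eta_left)
  ultimately show ?thesis
    using dagger_wscale[OF inW_ksem[OF C]] by simp
qed

end

section \<open>The unrolled loop\<close>

lemma lift_kernel_eq_Some_iff: "lift_kernel g = Some F \<longleftrightarrow> (\<forall>\<sigma>. g \<sigma> = Some (F \<sigma>))"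
proof
  assume "lift_kernel g = Some F"
  then have "\<forall>\<sigma>. g \<sigma> \<noteq> None" and "F = (\<lambda>\<sigma>. the (g \<sigma>))"
    unfolding lift_kernel_def by (auto split: if_splits)
  then show "\<forall>\<sigma>. g \<sigma> = Some (F \<sigma>)"
    by auto
next
  assume "\<forall>\<sigma>. g \<sigma> = Some (F \<sigma>)"
  then show "lift_kernel g = Some F"
    unfolding lift_kernel_def by simp
qed

lemma lift_kernel_eq_None_iff: "lift_kernel g = None \<longleftrightarrow> (\<exists>\<sigma>. g \<sigma> = None)"
  unfolding lift_kernel_def by auto

context good_psemiring
begin

lemma wsum_eq_lift_W: "wsum A ms = lift_W A (\<lambda>\<tau>. osum_list.list.F (map (\<lambda>m. Some (m \<tau>)) ms))"
proof (induction ms)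
  case Nil
  show ?case
    using inW_wzero by (simp add: lift_W_def wzero_def)
next
  case (Cons m ms)
  define g where "g \<tau> = osum_list.list.F (map (\<lambda>m. Some (m \<tau>)) ms)" for \<tau>
  have Cons_eq: "osum_list.list.F (map (\<lambda>m. Some (m \<tau>)) (m # ms)) = oadd A (g \<tau>) (Some (m \<tau>))"
    for \<tau>
    unfolding g_def by (simp add: osum.commute)
  show ?case
  proof (cases "lift_W A g")
    case None
    then have "lift_W A (\<lambda>\<tau>. oadd A (g \<tau>) (Some (m \<tau>))) = None"
      by (rule lift_W_oadd_None)
    with Cons.IH None show ?thesis
      unfolding Cons_eq g_def by simp
  next
    case (Some M)
    then have "g \<tau> = Some (M \<tau>)" for \<tau>
      by (simp add: lift_W_eq_Some_iff)
    with Cons.IH Some show ?thesis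
      unfolding Cons_eq g_def by (simp add: wadd_eq_lift_W padd_commute)
  qed
qed

lemma sem_sum_total:
  assumes "\<forall>P\<in>set Ps. total_sem A P"
  shows "sem_sum A Ps =
    lift_kernel (\<lambda>\<sigma>. lift_W A (\<lambda>\<tau>. osum_list.list.F (map (\<lambda>P. Some (ksem A P \<sigma> \<tau>)) Ps)))"
proof -
  have "those (map (\<lambda>P. sem A P \<sigma>) Ps) = Some (map (\<lambda>P. ksem A P \<sigma>) Ps)" for \<sigma>
    using assms by (induction Ps) (auto simp: sem_eq_ksem)
  then show ?thesis
    unfolding sem_sum_def by (simp add: wsum_eq_lift_W comp_def)
qed

end

locale unrolled_loop = good_psemiring A for A :: "'u psemiring" +
  fixes C :: "('s, 'u) prog" and e e' :: "('s, 'u) expr"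
  assumes total_C: "total_sem A C"
begin

definition loop_sum :: "nat \<Rightarrow> 's \<Rightarrow> 's \<Rightarrow> 'u option" where
  "loop_sum n \<sigma> \<tau> = fsum (\<lambda>k. ksem A (unroll C e e' k) \<sigma> \<tau>) {..<n}"

lemma sem_sum_unroll:
  "sem_sum A (map (unroll C e e') [0..<n]) = lift_kernel (\<lambda>\<sigma>. lift_W A (loop_sum n \<sigma>))"
proof -
  have "osum_list.list.F (map (\<lambda>k. Some (ksem A (unroll C e e' k) \<sigma> \<tau>)) [0..<n]) = loop_sum n \<sigma> \<tau>"
    for \<sigma> \<tau>
    unfolding loop_sum_def by (simp add: osum_list.distinct_set_conv_list[symmetric] atLeast0LessThan)
  then show ?thesis
    using total_unroll[OF total_C] by (simp add: sem_sum_total comp_def)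
qed

lemma loop_sum_Suc:
  "loop_sum (Suc n) \<sigma> = (\<lambda>\<tau>. oadd A (loop_sum n \<sigma> \<tau>) (Some (ksem A (unroll C e e' n) \<sigma> \<tau>)))"
  unfolding loop_sum_def by (simp add: osum.commute)

text \<open>The heart of the argument: \<open>\<Phi>\<close> adds one more unrolling of the loop, at the front.\<close>

lemma loop_sum_Suc_front:
  assumes F: "\<And>\<rho> \<tau>. loop_sum n \<rho> \<tau> = Some (F \<rho> \<tau>)"
  shows "loop_sum (Suc n) \<sigma> = (\<lambda>\<tau>.
    padd A (pmul A (esem A e \<sigma>) (dagger A F (ksem A C \<sigma>) \<tau>)) (pmul A (esem A e' \<sigma>) (eta A \<sigma> \<tau>)))"
proof
  fix \<tau>
  have "fsum (\<lambda>k. dagger A (ksem A (unroll C e e' k)) (ksem A C \<sigma>) \<tau>) {..<n}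
      = Some (dagger A F (ksem A C \<sigma>) \<tau>)"
    using F unfolding loop_sum_def by (intro dagger_fsum inW_ksem total_C) auto
  from fsum_pmul_left[OF finite_lessThan this, of "esem A e \<sigma>"]
  have "fsum (\<lambda>k. ksem A (unroll C e e' (Suc k)) \<sigma> \<tau>) {..<n}
      = Some (pmul A (esem A e \<sigma>) (dagger A F (ksem A C \<sigma>) \<tau>))"
    by (simp add: ksem_unroll_Suc[OF total_C] wscale_def)
  moreover have "loop_sum (Suc n) \<sigma> \<tau>
      = oadd A (Some (ksem A (unroll C e e' 0) \<sigma> \<tau>))
          (fsum (\<lambda>k. ksem A (unroll C e e' (Suc k)) \<sigma> \<tau>) {..<n})"
    unfolding loop_sum_def lessThan_Suc_eq_insert_0 by (simp add: osum.reindex comp_def)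
  ultimately show "loop_sum (Suc n) \<sigma> \<tau> = padd A (pmul A (esem A e \<sigma>) (dagger A F (ksem A C \<sigma>) \<tau>))
      (pmul A (esem A e' \<sigma>) (eta A \<sigma> \<tau>))"
    by (simp add: ksem_unroll_0 wscale_def padd_commute)
qed

lemma Phi_loop_sum:
  assumes "lift_kernel (\<lambda>\<sigma>. lift_W A (loop_sum n \<sigma>)) = Some F"
  shows "Phi A C e e' F = lift_kernel (\<lambda>\<sigma>. lift_W A (loop_sum (Suc n) \<sigma>))"
proof -
  have F: "loop_sum n \<sigma> \<tau> = Some (F \<sigma> \<tau>)" and "inW A (F \<sigma>)" for \<sigma> \<tau>
    using assms by (simp_all add: lift_kernel_eq_Some_iff lift_W_eq_Some_iff)
  then have "W_kernel A F"
    unfolding W_kernel_def by blast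
  then show ?thesis
    unfolding Phi_def
    by (simp add: sem_eq_ksem[OF total_C] bind_eq_dagger[OF inW_ksem[OF total_C]] wadd_eq_lift_W
        wscale_def loop_sum_Suc_front[OF F])
qed

lemma Phi_iter_eq_sem_sum: "Phi_iter A C e e' n = sem_sum A (map (unroll C e e') [0..<n])"
proof (induction n)
  case 0
  show ?case
    by (simp add: sem_sum_def lift_kernel_def)
next
  case (Suc n)
  show ?case
  proof (cases "lift_kernel (\<lambda>\<sigma>. lift_W A (loop_sum n \<sigma>))")
    case None
    then obtain \<sigma> where "lift_W A (loop_sum n \<sigma>) = None"
      unfolding lift_kernel_eq_None_iff by blast
    then have "lift_W A (loop_sum (Suc n) \<sigma>) = None"
      unfolding loop_sum_Suc by (rule lift_W_oadd_None)
    then have "sem_sum A (map (unroll C e e') [0..<Suc n]) = None"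
      unfolding sem_sum_unroll lift_kernel_eq_None_iff by blast
    with Suc.IH None show ?thesis
      by (simp add: sem_sum_unroll del: upt_Suc)
  next
    case (Some F)
    with Suc.IH show ?thesis
      by (simp add: sem_sum_unroll Phi_loop_sum del: upt_Suc)
  qed
qed

end

theorem lemmaB2:
  fixes A :: "'u psemiring" and C :: "('s, 'u) prog" and e e' :: "('s, 'u) expr" and n :: nat
  assumes "good_semiring A"
    and "total_sem A C"
    and "\<forall>k\<le>n. total_sem A (Seq (ppow (Seq (Assume e) C) k) (Assume e'))"
  shows "Phi_iter A C e e' (Suc n)
           = sem_sum A (map (\<lambda>k. Seq (ppow (Seq (Assume e) C) k) (Assume e')) [0..<Suc n])"
proof -
  interpret unrolled_loop A C e e'
    using assms(1,2) by (simp add: unrolled_loop_def unrolled_loop_axioms_def good_psemiring_def)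
  show ?thesis
    using Phi_iter_eq_sem_sum[of "Suc n"] unfolding unroll_def[abs_def] .
qed

end
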